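(* Let $G$ be a two-player stage game with $|V_1^{p,p}|>1$ and $|V_2^{p,p}|>1$. If $G\in\mathcal{G}_{LS}^{m,m}$, then $G\in\mathcal{G}_{LS}^{p,p}$.
   Context: A two-player stage game $G$ has finite nonempty action sets $A_1,A_2$ and payoffs $u_1,u_2:A_1\times A_2\to\mathbb{R}$, extended to mixed strategies by expectation. $G(T)$ is the $T$-round repetition with realized actions observed each round and payoffs the expected sum of stage payoffs; an SPE of $G(T)$ is a strategy profile whose continuation after every history of length $k<T$ is a Nash equilibrium of $G(T-k)$. Regimes: pure-pure ($p,p$): both players restricted to actions (in the stage game and in every round, including deviations); mixed-pure ($m,p$): player 1 may mix, player 2 uses only actions; mixed-mixed ($m,m$): both may mix. For regime $r$, $\mathrm{Nash}^r(G)$ is the set of stage-game profiles available in $r$ from which no player can profitably deviate unilaterally to a strategy available in $r$, and $V_i^r=\{u_i(\sigma):\sigma\in\mathrm{Nash}^r(G)\}$. Locally suboptimal behavior occurs in an SPE $\mu$ of $G(T)$ (regime $r$) if for some history $h$ of length $k<T$, $(\mu_1(h),\mu_2(h))\notin\mathrm{Nash}^r(G)$. $\mathcal{G}_{LS}^r$ is the set of stage games $G$ for which there exist $T\ge1$ and an SPE of $G(T)$ in regime $r$ in which locally suboptimal behavior occurs. *)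

theory Defs
  imports Complex_Main
begin

text \<open>Action sets are the finite (nonempty) types 'a (player 1) and 'b (player 2).
A regime is a pair of booleans (m1, m2): True = that player may mix, False = pure only.\<close>

definition mixed :: "('a::finite \<Rightarrow> real) set" where
  "mixed = {\<sigma>. (\<forall>x. 0 \<le> \<sigma> x) \<and> (\<Sum>x\<in>UNIV. \<sigma> x) = 1}"

definition pure :: "('a::finite \<Rightarrow> real) set" where
  "pure = range (\<lambda>a x. if x = a then 1 else 0)"

definition avail :: "bool \<Rightarrow> ('a::finite \<Rightarrow> real) set" where
  "avail m = (if m then mixed else pure)"

definition EU :: "('a::finite \<Rightarrow> 'b::finite \<Rightarrow> real) \<Rightarrow> ('a \<Rightarrow> real) \<Rightarrow> ('b \<Rightarrow> real) \<Rightarrow> real" where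
  "EU u s1 s2 = (\<Sum>a\<in>UNIV. \<Sum>b\<in>UNIV. s1 a * s2 b * u a b)"

definition stageNash :: "bool \<times> bool \<Rightarrow> ('a::finite \<Rightarrow> 'b::finite \<Rightarrow> real) \<Rightarrow> ('a \<Rightarrow> 'b \<Rightarrow> real)
    \<Rightarrow> (('a \<Rightarrow> real) \<times> ('b \<Rightarrow> real)) set" where
  "stageNash r u1 u2 = {(s1, s2). s1 \<in> avail (fst r) \<and> s2 \<in> avail (snd r) \<and>
      (\<forall>t1\<in>avail (fst r). EU u1 t1 s2 \<le> EU u1 s1 s2) \<and>
      (\<forall>t2\<in>avail (snd r). EU u2 s1 t2 \<le> EU u2 s1 s2)}"

definition V1 :: "bool \<times> bool \<Rightarrow> ('a::finite \<Rightarrow> 'b::finite \<Rightarrow> real) \<Rightarrow> ('a \<Rightarrow> 'b \<Rightarrow> real) \<Rightarrow> real set" where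
  "V1 r u1 u2 = (\<lambda>(s1, s2). EU u1 s1 s2) ` stageNash r u1 u2"

definition V2 :: "bool \<times> bool \<Rightarrow> ('a::finite \<Rightarrow> 'b::finite \<Rightarrow> real) \<Rightarrow> ('a \<Rightarrow> 'b \<Rightarrow> real) \<Rightarrow> real set" where
  "V2 r u1 u2 = (\<lambda>(s1, s2). EU u2 s1 s2) ` stageNash r u1 u2"

text \<open>A history is the list of realized action profiles (chronological).\<close>
fun rval :: "('a::finite \<Rightarrow> 'b::finite \<Rightarrow> real) \<Rightarrow> (('a \<times> 'b) list \<Rightarrow> 'a \<Rightarrow> real)
    \<Rightarrow> (('a \<times> 'b) list \<Rightarrow> 'b \<Rightarrow> real) \<Rightarrow> ('a \<times> 'b) list \<Rightarrow> nat \<Rightarrow> real" where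
  "rval u f1 f2 h 0 = 0"
| "rval u f1 f2 h (Suc n) =
     (\<Sum>a\<in>UNIV. \<Sum>b\<in>UNIV. f1 h a * f2 h b * (u a b + rval u f1 f2 (h @ [(a, b)]) n))"

definition strat :: "bool \<Rightarrow> (('a::finite \<times> 'b::finite) list \<Rightarrow> 'c::finite \<Rightarrow> real) \<Rightarrow> bool" where
  "strat m f = (\<forall>h. f h \<in> avail m)"

definition repNash :: "bool \<times> bool \<Rightarrow> ('a::finite \<Rightarrow> 'b::finite \<Rightarrow> real) \<Rightarrow> ('a \<Rightarrow> 'b \<Rightarrow> real) \<Rightarrow> nat
    \<Rightarrow> (('a \<times> 'b) list \<Rightarrow> 'a \<Rightarrow> real) \<Rightarrow> (('a \<times> 'b) list \<Rightarrow> 'b \<Rightarrow> real) \<Rightarrow> bool" where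
  "repNash r u1 u2 T f1 f2 = (strat (fst r) f1 \<and> strat (snd r) f2 \<and>
      (\<forall>g1. strat (fst r) g1 \<longrightarrow> rval u1 g1 f2 [] T \<le> rval u1 f1 f2 [] T) \<and>
      (\<forall>g2. strat (snd r) g2 \<longrightarrow> rval u2 f1 g2 [] T \<le> rval u2 f1 f2 [] T))"

definition cont :: "('h list \<Rightarrow> 'x) \<Rightarrow> 'h list \<Rightarrow> 'h list \<Rightarrow> 'x" where
  "cont f h = (\<lambda>h'. f (h @ h'))"

definition SPE :: "bool \<times> bool \<Rightarrow> ('a::finite \<Rightarrow> 'b::finite \<Rightarrow> real) \<Rightarrow> ('a \<Rightarrow> 'b \<Rightarrow> real) \<Rightarrow> nat
    \<Rightarrow> (('a \<times> 'b) list \<Rightarrow> 'a \<Rightarrow> real) \<Rightarrow> (('a \<times> 'b) list \<Rightarrow> 'b \<Rightarrow> real) \<Rightarrow> bool" where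
  "SPE r u1 u2 T f1 f2 = (strat (fst r) f1 \<and> strat (snd r) f2 \<and>
      (\<forall>h. length h < T \<longrightarrow> repNash r u1 u2 (T - length h) (cont f1 h) (cont f2 h)))"

definition LS :: "bool \<times> bool \<Rightarrow> ('a::finite \<Rightarrow> 'b::finite \<Rightarrow> real) \<Rightarrow> ('a \<Rightarrow> 'b \<Rightarrow> real) \<Rightarrow> bool" where
  "LS r u1 u2 = (\<exists>T\<ge>1. \<exists>f1 f2. SPE r u1 u2 T f1 f2 \<and>
      (\<exists>h. length h < T \<and> (f1 h, f2 h) \<notin> stageNash r u1 u2))"

end

theory Submission imports Defs begin

text \<open>A pure profile that is not a stage equilibrium exists as soon as mixed strategies
admit locally suboptimal play: otherwise each payoff would be independent of the player's own
action, making every mixed profile a stage equilibrium. Play that profile in the first round.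
Afterwards play a fixed sequence of pure stage equilibria, chosen according to the first-round
profile: on the path, L rounds of an equilibrium good for player 1 followed by L rounds of one
good for player 2; after a unilateral deviation, the equilibrium that is worst for the deviator.
Since each player has two equilibrium payoffs, the worst one is strictly below some other one,
so for L large the loss in the continuation outweighs any gain in the first round.\<close>

definition point_mass :: "'a \<Rightarrow> 'a \<Rightarrow> real" where
  "point_mass a = (\<lambda>x. if x = a then 1 else 0)"

definition pure_NE :: "('a \<Rightarrow> 'b \<Rightarrow> real) \<Rightarrow> ('a \<Rightarrow> 'b \<Rightarrow> real) \<Rightarrow> ('a \<times> 'b) set" where
  "pure_NE u1 u2 = {(a, b). (\<forall>a'. u1 a' b \<le> u1 a b) \<and> (\<forall>b'. u2 a b' \<le> u2 a b)}"

lemma pure_eq_range_point_mass: "pure = range point_mass"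
  by (simp add: pure_def point_mass_def)

lemma point_mass_inject [simp]: "point_mass a = point_mass b \<longleftrightarrow> a = b"
  unfolding point_mass_def by (metis zero_neq_one)

lemma sum_point_mass: "(\<Sum>x\<in>(UNIV::'a::finite set). point_mass a x * F x) = F a"
  unfolding point_mass_def by (simp add: if_distrib[where f = "\<lambda>c. c * F _"] cong: if_cong)

lemma sum_sum_point_mass:
  "(\<Sum>x\<in>(UNIV::'a::finite set). \<Sum>y\<in>(UNIV::'b::finite set). point_mass a x * point_mass b y * F x y)
     = F a b"
  by (simp add: sum_distrib_left mult.assoc sum_point_mass flip: sum_distrib_left)

lemma EU_point_mass: "EU u (point_mass a) (point_mass b) = u a b"
  unfolding EU_def by (rule sum_sum_point_mass)

lemma stageNash_pure_eq:
  "stageNash (False, False) u1 u2 = (\<lambda>(a, b). (point_mass a, point_mass b)) ` pure_NE u1 u2"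
  by (fastforce simp: stageNash_def avail_def pure_eq_range_point_mass EU_point_mass pure_NE_def)

lemma V1_pure_eq: "V1 (False, False) u1 u2 = case_prod u1 ` pure_NE u1 u2"
  by (force simp: V1_def stageNash_pure_eq image_image EU_point_mass intro: image_cong)

lemma V2_pure_eq: "V2 (False, False) u1 u2 = case_prod u2 ` pure_NE u1 u2"
  by (force simp: V2_def stageNash_pure_eq image_image EU_point_mass intro: image_cong)

lemma EU_mixed_fst_irrelevant:
  assumes "\<And>a a' b. u a b = u a' b" and "t \<in> mixed"
  shows "EU u t s = (\<Sum>b\<in>UNIV. s b * u a b)"
proof -
  have "EU u t s = (\<Sum>x\<in>UNIV. t x * (\<Sum>b\<in>UNIV. s b * u a b))"
    unfolding EU_def sum_distrib_left by (intro sum.cong refl) (metis assms(1) mult.assoc)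
  also have "\<dots> = (\<Sum>x\<in>UNIV. t x) * (\<Sum>b\<in>UNIV. s b * u a b)"
    by (simp add: sum_distrib_right)
  finally show ?thesis using assms(2) by (simp add: mixed_def)
qed

lemma EU_mixed_snd_irrelevant:
  assumes "\<And>a b b'. u a b = u a b'" and "t \<in> mixed"
  shows "EU u s t = (\<Sum>a\<in>UNIV. s a * u a b)"
proof -
  have "EU u s t = (\<Sum>a\<in>UNIV. s a * u a b * (\<Sum>y\<in>UNIV. t y))"
    unfolding EU_def sum_distrib_left
    by (intro sum.cong refl) (metis assms(1) mult.commute mult.left_commute)
  with assms(2) show ?thesis by (simp add: mixed_def)
qed

lemma stageNash_mixed_if_all_pure_NE:
  assumes "pure_NE u1 u2 = UNIV"
  shows "stageNash (True, True) u1 u2 = mixed \<times> mixed"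
proof -
  have "u1 a b = u1 a' b" "u2 a b = u2 a b'" for a a' b b'
    using assms by (auto simp: pure_NE_def set_eq_iff intro: order_antisym)
  then show ?thesis
    by (auto simp: stageNash_def avail_def EU_mixed_fst_irrelevant[where a = undefined]
        EU_mixed_snd_irrelevant[where b = undefined])
qed

lemma ex_not_pure_NE_if_LS_mixed:
  assumes "LS (True, True) u1 u2"
  shows "\<exists>p. p \<notin> pure_NE u1 u2"
proof (rule ccontr)
  assume "\<not> ?thesis"
  then have "stageNash (True, True) u1 u2 = mixed \<times> mixed"
    by (intro stageNash_mixed_if_all_pure_NE) auto
  with assms show False
    by (auto simp: LS_def SPE_def strat_def avail_def)
qed

lemma rval_Suc_point_mass:
  "f1 h = point_mass a \<Longrightarrow> f2 h = point_mass b \<Longrightarrow>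
   rval u f1 f2 h (Suc n) = u a b + rval u f1 f2 (h @ [(a, b)]) n"
  by (simp add: sum_sum_point_mass)

lemma rval_follow_path:
  assumes "\<And>hh. f1 (h @ hh) = point_mass (s (length hh))"
    and "\<And>hh. f2 (h @ hh) = point_mass (q (length hh))"
  shows "rval u f1 f2 h n = (\<Sum>k<n. u (s k) (q k))"
  using assms
proof (induction n arbitrary: h s q)
  case (Suc n)
  have "rval u f1 f2 h (Suc n) = u (s 0) (q 0) + rval u f1 f2 (h @ [(s 0, q 0)]) n"
    using Suc.prems[of "[]"] by (intro rval_Suc_point_mass) auto
  also have "rval u f1 f2 (h @ [(s 0, q 0)]) n = (\<Sum>k<n. u (s (Suc k)) (q (Suc k)))"
    using Suc.prems by (intro Suc.IH) auto
  finally show ?case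
    by (simp add: sum.lessThan_Suc_shift del: sum.lessThan_Suc)
qed simp

lemma rval_pure_le:
  assumes "\<And>hh. f1 (h @ hh) \<in> pure" and "\<And>hh. f2 (h @ hh) \<in> pure"
    and "\<And>hh a b. f1 (h @ hh) = point_mass a \<Longrightarrow> f2 (h @ hh) = point_mass b
           \<Longrightarrow> u a b \<le> c (length hh)"
  shows "rval u f1 f2 h n \<le> (\<Sum>k<n. c k)"
  using assms
proof (induction n arbitrary: h c)
  case (Suc n)
  obtain a b where ab: "f1 h = point_mass a" "f2 h = point_mass b"
    using Suc.prems(1,2)[of "[]"] by (auto simp: pure_eq_range_point_mass)
  have "rval u f1 f2 h (Suc n) = u a b + rval u f1 f2 (h @ [(a, b)]) n"
    using ab by (rule rval_Suc_point_mass)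
  also have "\<dots> \<le> c 0 + (\<Sum>k<n. c (Suc k))"
  proof (rule add_mono)
    show "u a b \<le> c 0"
      using Suc.prems(3)[of "[]"] ab by simp
    have "u a' b' \<le> c (Suc (length hh))"
      if "f1 (h @ [(a, b)] @ hh) = point_mass a'" "f2 (h @ [(a, b)] @ hh) = point_mass b'"
      for hh a' b'
      using Suc.prems(3)[of "(a, b) # hh"] that by simp
    then show "rval u f1 f2 (h @ [(a, b)]) n \<le> (\<Sum>k<n. c (Suc k))"
      using Suc.prems(1,2) by (intro Suc.IH) auto
  qed
  finally show ?case
    by (simp add: sum.lessThan_Suc_shift del: sum.lessThan_Suc)
qed simp

lemma repNash_of_NE_path:
  assumes f1: "\<And>hh. f1 hh = point_mass (s (length hh))"
    and f2: "\<And>hh. f2 hh = point_mass (q (length hh))"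
    and NE: "\<And>k. (s k, q k) \<in> pure_NE u1 u2"
  shows "repNash (False, False) u1 u2 n f1 f2"
proof -
  have path: "rval u f1 f2 [] n = (\<Sum>k<n. u (s k) (q k))" for u
    using f1 f2 by (intro rval_follow_path) auto
  have "rval u1 g1 f2 [] n \<le> rval u1 f1 f2 [] n" if "strat False g1" for g1
    unfolding path using that NE f2
    by (intro rval_pure_le) (auto simp: strat_def avail_def pure_NE_def pure_eq_range_point_mass)
  moreover have "rval u2 f1 g2 [] n \<le> rval u2 f1 f2 [] n" if "strat False g2" for g2
    unfolding path using that NE f1
    by (intro rval_pure_le) (auto simp: strat_def avail_def pure_NE_def pure_eq_range_point_mass)
  ultimately show ?thesis
    using f1 f2 by (simp add: repNash_def strat_def avail_def pure_eq_range_point_mass)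
qed

context
  fixes u1 :: "'a::finite \<Rightarrow> 'b::finite \<Rightarrow> real" and u2 :: "'a \<Rightarrow> 'b \<Rightarrow> real"
    and f1 :: "('a \<times> 'b) list \<Rightarrow> 'a \<Rightarrow> real" and f2 :: "('a \<times> 'b) list \<Rightarrow> 'b \<Rightarrow> real"
    and plan :: "'a \<times> 'b \<Rightarrow> nat \<Rightarrow> 'a \<times> 'b" and a0 :: 'a and b0 :: 'b and n :: nat
  assumes f1: "f1 [] = point_mass a0" "\<And>p hh. f1 (p # hh) = point_mass (fst (plan p (length hh)))"
    and f2: "f2 [] = point_mass b0" "\<And>p hh. f2 (p # hh) = point_mass (snd (plan p (length hh)))"
    and NE: "\<And>p k. plan p k \<in> pure_NE u1 u2"
    and dev1: "\<And>a. u1 a b0 + (\<Sum>k<n. case_prod u1 (plan (a, b0) k))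
                 \<le> u1 a0 b0 + (\<Sum>k<n. case_prod u1 (plan (a0, b0) k))"
    and dev2: "\<And>b. u2 a0 b + (\<Sum>k<n. case_prod u2 (plan (a0, b) k))
                 \<le> u2 a0 b0 + (\<Sum>k<n. case_prod u2 (plan (a0, b0) k))"
begin

lemma first_round_strategies_pure: "f1 h \<in> pure" "f2 h \<in> pure"
  using f1 f2 by (cases h; simp add: pure_eq_range_point_mass)+

lemma repNash_first_round: "repNash (False, False) u1 u2 (Suc n) f1 f2"
proof -
  note pure = first_round_strategies_pure
  have path: "rval u f1 f2 [] (Suc n) = u a0 b0 + (\<Sum>k<n. case_prod u (plan (a0, b0) k))" for u
  proof -
    have "rval u f1 f2 [] (Suc n) = u a0 b0 + rval u f1 f2 [(a0, b0)] n"
      using rval_Suc_point_mass[of f1 "[]" a0 f2 b0] f1(1) f2(1) by simp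
    also have "rval u f1 f2 [(a0, b0)] n = (\<Sum>k<n. case_prod u (plan (a0, b0) k))"
      using f1(2) f2(2) by (subst rval_follow_path) (auto simp: case_prod_beta)
    finally show ?thesis .
  qed
  have "rval u1 g1 f2 [] (Suc n) \<le> rval u1 f1 f2 [] (Suc n)" if g1: "strat False g1" for g1
  proof -
    obtain a where a: "g1 [] = point_mass a"
      using g1 by (auto simp: strat_def avail_def pure_eq_range_point_mass)
    have "rval u1 g1 f2 [] (Suc n) = u1 a b0 + rval u1 g1 f2 [(a, b0)] n"
      using rval_Suc_point_mass[of g1 "[]" a f2 b0] a f2(1) by simp
    also have "rval u1 g1 f2 [(a, b0)] n \<le> (\<Sum>k<n. case_prod u1 (plan (a, b0) k))"
      using g1 pure NE f2(2)
      by (intro rval_pure_le) (auto simp: strat_def avail_def pure_NE_def case_prod_beta pure_eq_range_point_mass)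
    finally show ?thesis using dev1[of a] path[of u1] by simp
  qed
  moreover have "rval u2 f1 g2 [] (Suc n) \<le> rval u2 f1 f2 [] (Suc n)" if g2: "strat False g2" for g2
  proof -
    obtain b where b: "g2 [] = point_mass b"
      using g2 by (auto simp: strat_def avail_def pure_eq_range_point_mass)
    have "rval u2 f1 g2 [] (Suc n) = u2 a0 b + rval u2 f1 g2 [(a0, b)] n"
      using rval_Suc_point_mass[of f1 "[]" a0 g2 b] f1(1) b by simp
    also have "rval u2 f1 g2 [(a0, b)] n \<le> (\<Sum>k<n. case_prod u2 (plan (a0, b) k))"
      using g2 pure NE f1(2)
      by (intro rval_pure_le) (auto simp: strat_def avail_def pure_NE_def case_prod_beta pure_eq_range_point_mass)
    finally show ?thesis using dev2[of b] path[of u2] by simp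
  qed
  ultimately show ?thesis
    using pure by (simp add: repNash_def strat_def avail_def)
qed

lemma SPE_first_round: "SPE (False, False) u1 u2 (Suc n) f1 f2"
proof -
  have "repNash (False, False) u1 u2 (Suc n - length h) (cont f1 h) (cont f2 h)" for h
  proof (cases h)
    case Nil
    then show ?thesis
      using repNash_first_round by (simp add: cont_def)
  next
    case (Cons p h')
    show ?thesis
      by (rule repNash_of_NE_path[where s = "\<lambda>k. fst (plan p (length h' + k))"
            and q = "\<lambda>k. snd (plan p (length h' + k))"]) (simp_all add: Cons cont_def f1 f2 NE)
  qed
  with first_round_strategies_pure show ?thesis
    by (simp add: SPE_def strat_def avail_def)
qed

end

lemma eventually_le_nat_mult:
  fixes f :: "'a::finite \<Rightarrow> real"
  assumes "0 < \<delta>"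
  shows "\<forall>\<^sub>F L in sequentially. \<forall>x. f x \<le> real L * \<delta>"
proof -
  obtain L0 :: nat where L0: "Max (range f) / \<delta> \<le> real L0"
    using real_arch_simple by blast
  have "Max (range f) \<le> real L * \<delta>" if "L0 \<le> L" for L
    using L0 that assms by (simp add: pos_divide_le_eq order_trans)
  then show ?thesis
    unfolding eventually_sequentially by (meson Max_ge finite_UNIV finite_imageI order_trans rangeI)
qed

lemma sum_two_phases:
  "(\<Sum>k<2 * L. if k < L then A else B) = of_nat L * A + of_nat L * (B :: 'a::semiring_1)"
proof -
  have "{..<2 * L} \<inter> {k. k < L} = {..<L}" "{..<2 * L} \<inter> - {k. k < L} = {L..<2 * L}"
    by auto
  then show ?thesis
    by (simp add: sum.If_cases)
qed

lemma ex_min_lt_if_card_image_gt_1: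
  fixes f :: "'a \<Rightarrow> 'b::linorder"
  assumes "finite N" and "1 < card (f ` N)"
  shows "\<exists>e\<in>N. \<exists>e'\<in>N. f e < f e' \<and> (\<forall>z\<in>N. f e \<le> f z)"
proof -
  have "N \<noteq> {}"
    using assms(2) by auto
  then have "Min (f ` N) \<in> f ` N"
    using assms(1) by (intro Min_in) auto
  then obtain e where e: "e \<in> N" "f e = Min (f ` N)"
    by (metis imageE)
  have "\<not> f ` N \<subseteq> {f e}"
    using assms(2) card_mono[of "{f e}" "f ` N"] by auto
  then obtain e' where "e' \<in> N" "f e' \<noteq> f e"
    by auto
  moreover have "f e \<le> f z" if "z \<in> N" for z
    using e assms(1) that by simp
  ultimately show ?thesis
    using e(1) by (metis order_le_neq_trans)
qed

lemma LS_pure_by_reward_and_punishment: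
  assumes not_NE: "(a0, b0) \<notin> pure_NE u1 u2"
    and NE: "pun1 \<in> pure_NE u1 u2" "rew1 \<in> pure_NE u1 u2"
            "pun2 \<in> pure_NE u1 u2" "rew2 \<in> pure_NE u1 u2"
    and gap1: "case_prod u1 pun1 < case_prod u1 rew1" "case_prod u1 pun1 \<le> case_prod u1 rew2"
    and gap2: "case_prod u2 pun2 < case_prod u2 rew2" "case_prod u2 pun2 \<le> case_prod u2 rew1"
  shows "LS (False, False) u1 u2"
proof -
  have "\<forall>\<^sub>F L in sequentially.
      (\<forall>a. u1 a b0 - u1 a0 b0 \<le> real L * (case_prod u1 rew1 - case_prod u1 pun1)) \<and>
      (\<forall>b. u2 a0 b - u2 a0 b0 \<le> real L * (case_prod u2 rew2 - case_prod u2 pun2))"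
    using gap1(1) gap2(1) by (intro eventually_conj eventually_le_nat_mult) auto
  then obtain L :: nat
    where gain1: "\<And>a. u1 a b0 - u1 a0 b0 \<le> real L * (case_prod u1 rew1 - case_prod u1 pun1)"
      and gain2: "\<And>b. u2 a0 b - u2 a0 b0 \<le> real L * (case_prod u2 rew2 - case_prod u2 pun2)"
    by (auto simp: eventually_sequentially)
  \<comment> \<open>Joint deviations need not be deterred, so they are lumped with deviations of player 2.\<close>
  define plan where "plan p k = (if p = (a0, b0) then if k < L then rew1 else rew2
                                 else if snd p = b0 then pun1 else pun2)" for p k
  define f1 where "f1 h = point_mass (case h of [] \<Rightarrow> a0 | p # hh \<Rightarrow> fst (plan p (length hh)))" for h
  define f2 where "f2 h = point_mass (case h of [] \<Rightarrow> b0 | p # hh \<Rightarrow> snd (plan p (length hh)))" for h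
  have reward: "(\<Sum>k<2 * L. case_prod u (plan (a0, b0) k))
      = real L * case_prod u rew1 + real L * case_prod u rew2" for u
    by (simp add: plan_def if_distrib[of "case_prod u"] sum_two_phases)
  have "SPE (False, False) u1 u2 (Suc (2 * L)) f1 f2"
  proof (rule SPE_first_round)
    show "plan p k \<in> pure_NE u1 u2" for p k
      using NE by (simp add: plan_def)
    show "u1 a b0 + (\<Sum>k<2 * L. case_prod u1 (plan (a, b0) k))
        \<le> u1 a0 b0 + (\<Sum>k<2 * L. case_prod u1 (plan (a0, b0) k))" for a
    proof (cases "a = a0")
      case False
      then have "(\<Sum>k<2 * L. case_prod u1 (plan (a, b0) k))
          = real L * case_prod u1 pun1 + real L * case_prod u1 pun1"
        by (simp add: plan_def)
      moreover have "real L * case_prod u1 pun1 \<le> real L * case_prod u1 rew2"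
        using gap1(2) by (simp add: mult_left_mono)
      ultimately show ?thesis
        using gain1[of a] reward[of u1] by (simp add: right_diff_distrib)
    qed simp
    show "u2 a0 b + (\<Sum>k<2 * L. case_prod u2 (plan (a0, b) k))
        \<le> u2 a0 b0 + (\<Sum>k<2 * L. case_prod u2 (plan (a0, b0) k))" for b
    proof (cases "b = b0")
      case False
      then have "(\<Sum>k<2 * L. case_prod u2 (plan (a0, b) k))
          = real L * case_prod u2 pun2 + real L * case_prod u2 pun2"
        by (simp add: plan_def)
      moreover have "real L * case_prod u2 pun2 \<le> real L * case_prod u2 rew1"
        using gap2(2) by (simp add: mult_left_mono)
      ultimately show ?thesis
        using gain2[of b] reward[of u2] by (simp add: right_diff_distrib)
    qed simp
  qed (simp_all add: f1_def f2_def)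
  moreover have "(f1 [], f2 []) \<notin> stageNash (False, False) u1 u2"
    using not_NE by (auto simp: f1_def f2_def stageNash_pure_eq)
  ultimately show ?thesis
    unfolding LS_def by (intro exI[of _ "Suc (2 * L)"] conjI exI[of _ f1] exI[of _ f2] exI[of _ "[]"]) auto
qed

theorem mainTheorem17:
  fixes u1 :: "'a::finite \<Rightarrow> 'b::finite \<Rightarrow> real" and u2 :: "'a \<Rightarrow> 'b \<Rightarrow> real"
  assumes "card (V1 (False, False) u1 u2) > 1"
    and "card (V2 (False, False) u1 u2) > 1"
    and "LS (True, True) u1 u2"
  shows "LS (False, False) u1 u2"
proof -
  obtain a0 b0 where "(a0, b0) \<notin> pure_NE u1 u2"
    using ex_not_pure_NE_if_LS_mixed[OF assms(3)] by auto
  moreover obtain pun1 rew1 where "pun1 \<in> pure_NE u1 u2" "rew1 \<in> pure_NE u1 u2"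
    "case_prod u1 pun1 < case_prod u1 rew1"
    "\<forall>z\<in>pure_NE u1 u2. case_prod u1 pun1 \<le> case_prod u1 z"
    using ex_min_lt_if_card_image_gt_1[of "pure_NE u1 u2" "case_prod u1"] assms(1)
    by (auto simp: V1_pure_eq)
  moreover obtain pun2 rew2 where "pun2 \<in> pure_NE u1 u2" "rew2 \<in> pure_NE u1 u2"
    "case_prod u2 pun2 < case_prod u2 rew2"
    "\<forall>z\<in>pure_NE u1 u2. case_prod u2 pun2 \<le> case_prod u2 z"
    using ex_min_lt_if_card_image_gt_1[of "pure_NE u1 u2" "case_prod u2"] assms(2)
    by (auto simp: V2_pure_eq)
  ultimately show ?thesis
    by (intro LS_pure_by_reward_and_punishment[of a0 b0 u1 u2 pun1 rew1 pun2 rew2]) auto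
qed

end
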